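(* Let $u_1,u_2,u_3,u_4$ be Laurent polynomials with symmetry types $\mathrm{S}u_j(z)=\epsilon_jz^{c_j}$, $\epsilon_j\in\{\pm1\}$, $c_j\in\mathbb Z$, $j=1,2,3,4$, and suppose $\mathrm{S}u_1/\mathrm{S}u_2=\mathrm{S}u_3/\mathrm{S}u_4$. Define $$u_5(z):=u_1(z)u_3(z)+z^{c_1}u_2^\star(z)u_4(z),\qquad u_6(z):=u_2(z)u_3(z)+z^{c_1}u_1^\star(z)u_4(z).$$ Then $\mathrm{S}u_5(z)=\epsilon_1\epsilon_3z^{c_1+c_3}$, $\mathrm{S}u_6(z)=\epsilon_2\epsilon_3z^{c_2+c_3}$, $\mathrm{S}u_5/\mathrm{S}u_6=\mathrm{S}u_1/\mathrm{S}u_2=\mathrm{S}u_3/\mathrm{S}u_4$, and $$u_5u_5^\star-u_6u_6^\star=(u_1u_1^\star-u_2u_2^\star)(u_3u_3^\star-u_4u_4^\star).$$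
   Context: Laurent polynomial $u(z)=\sum_ku(k)z^k$ with finitely many nonzero complex coefficients; $u^\star(z):=\sum_k\overline{u(k)}z^{-k}$. $u$ has symmetry of type $\epsilon z^c$ if $u(z)=\epsilon z^cu(z^{-1})$; for nonzero $u$, $\mathrm{S}u(z):=u(z)/u(z^{-1})$; the zero polynomial has symmetry of every type. *)

theory Defs
  imports Complex_Main "HOL-Library.Poly_Mapping"
begin

text \<open>Laurent polynomials with complex coefficients: finitely supported maps
  int to complex; the product of poly_mapping is the convolution product, so
  single k a represents the monomial a z^k.\<close>

type_synonym laurent = "int \<Rightarrow>\<^sub>0 complex"

definition lrefl :: "laurent \<Rightarrow> laurent" where
  "lrefl u = (\<Sum>k\<in>Poly_Mapping.keys u. Poly_Mapping.single (- k) (Poly_Mapping.lookup u k))"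

definition lstar :: "laurent \<Rightarrow> laurent" where
  "lstar u = (\<Sum>k\<in>Poly_Mapping.keys u. Poly_Mapping.single (- k) (cnj (Poly_Mapping.lookup u k)))"

definition has_symmetry :: "laurent \<Rightarrow> complex \<Rightarrow> int \<Rightarrow> bool" where
  "has_symmetry u \<epsilon> c \<longleftrightarrow> u = Poly_Mapping.single c \<epsilon> * lrefl u"

end

theory Submission
  imports Defs
begin

text \<open>Symmetry types multiply: if u, v have types \<epsilon> z^c and \<delta> z^d then uv has type
  \<epsilon>\<delta> z^(c+d); a monomial z^k has type z^(2k); and u^star has type cnj \<epsilon> z^(-c), because
  star, like reflection, is a ring homomorphism commuting with reflection. By the ratio
  condition both summands of u5 (resp. u6) then have the same type. The norm identity needs
  no symmetry at all: star is an involutive ring homomorphism with (z^c)^star = z^(-c), so it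
  reduces to a polynomial identity in a commutative ring with z w = 1.\<close>

definition reflect_map :: "('a::zero \<Rightarrow> 'b::comm_monoid_add) \<Rightarrow> (int \<Rightarrow>\<^sub>0 'a) \<Rightarrow> int \<Rightarrow>\<^sub>0 'b" where
  "reflect_map \<phi> u = (\<Sum>k\<in>Poly_Mapping.keys u. Poly_Mapping.single (- k) (\<phi> (Poly_Mapping.lookup u k)))"

lemma lrefl_eq_reflect_map: "lrefl = reflect_map (\<lambda>x. x)"
  by (simp add: fun_eq_iff lrefl_def reflect_map_def)

lemma lstar_eq_reflect_map: "lstar = reflect_map cnj"
  by (simp add: fun_eq_iff lstar_def reflect_map_def)

lemma reflect_map_zero [simp]: "reflect_map \<phi> 0 = 0"
  by (simp add: reflect_map_def)

lemma lookup_reflect_map: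
  assumes "\<phi> 0 = 0"
  shows "Poly_Mapping.lookup (reflect_map \<phi> u) j = \<phi> (Poly_Mapping.lookup u (- j))"
proof -
  have "Poly_Mapping.lookup (reflect_map \<phi> u) j
      = (\<Sum>k\<in>Poly_Mapping.keys u. if k = - j then \<phi> (Poly_Mapping.lookup u k) else 0)"
    unfolding reflect_map_def lookup_sum by (intro sum.cong) (auto simp: lookup_single when_def)
  then show ?thesis
    using assms by (simp add: in_keys_iff)
qed

lemma sum_single_lookup:
  fixes u :: "'a \<Rightarrow>\<^sub>0 'b::comm_monoid_add"
  shows "(\<Sum>k\<in>Poly_Mapping.keys u. Poly_Mapping.single k (Poly_Mapping.lookup u k)) = u"
proof (rule poly_mapping_eqI)
  fix j
  have "Poly_Mapping.lookup (\<Sum>k\<in>Poly_Mapping.keys u. Poly_Mapping.single k (Poly_Mapping.lookup u k)) j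
      = (\<Sum>k\<in>Poly_Mapping.keys u. if k = j then Poly_Mapping.lookup u k else 0)"
    unfolding lookup_sum by (intro sum.cong) (auto simp: lookup_single when_def)
  then show "Poly_Mapping.lookup (\<Sum>k\<in>Poly_Mapping.keys u. Poly_Mapping.single k (Poly_Mapping.lookup u k)) j
      = Poly_Mapping.lookup u j"
    by (simp add: in_keys_iff)
qed

lemma single_eq_single_iff:
  "Poly_Mapping.single k a = Poly_Mapping.single l b \<longleftrightarrow> (a = 0 \<and> b = 0) \<or> (k = l \<and> a = b)"
  by (metis lookup_single_eq lookup_single_not_eq single_zero)

locale semiring_hom =
  fixes \<phi> :: "'a::comm_semiring_1 \<Rightarrow> 'b::comm_semiring_1"
  assumes hom_zero: "\<phi> 0 = 0"
    and hom_add: "\<phi> (a + b) = \<phi> a + \<phi> b"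
    and hom_mult: "\<phi> (a * b) = \<phi> a * \<phi> b"
begin

lemma reflect_map_add: "reflect_map \<phi> (u + v) = reflect_map \<phi> u + reflect_map \<phi> v"
  by (rule poly_mapping_eqI) (simp add: lookup_reflect_map hom_zero lookup_add hom_add)

lemma reflect_map_single:
  "reflect_map \<phi> (Poly_Mapping.single k a) = Poly_Mapping.single (- k) (\<phi> a)"
  by (rule poly_mapping_eqI) (simp add: lookup_reflect_map hom_zero lookup_single when_def)

lemma reflect_map_sum: "reflect_map \<phi> (sum f A) = (\<Sum>x\<in>A. reflect_map \<phi> (f x))"
  by (induction A rule: infinite_finite_induct) (simp_all add: reflect_map_add)

lemma reflect_map_mult: "reflect_map \<phi> (u * v) = reflect_map \<phi> u * reflect_map \<phi> v"
proof -
  let ?K = "Poly_Mapping.keys u" and ?L = "Poly_Mapping.keys v"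
  let ?uk = "Poly_Mapping.lookup u" and ?vl = "Poly_Mapping.lookup v"
  have "u * v = (\<Sum>k\<in>?K. Poly_Mapping.single k (?uk k)) * (\<Sum>l\<in>?L. Poly_Mapping.single l (?vl l))"
    by (simp only: sum_single_lookup)
  also have "\<dots> = (\<Sum>k\<in>?K. \<Sum>l\<in>?L. Poly_Mapping.single (k + l) (?uk k * ?vl l))"
    by (simp add: sum_product mult_single)
  finally have "reflect_map \<phi> (u * v)
      = (\<Sum>k\<in>?K. \<Sum>l\<in>?L. Poly_Mapping.single (- k + - l) (\<phi> (?uk k) * \<phi> (?vl l)))"
    by (simp add: reflect_map_sum reflect_map_single hom_mult)
  also have "\<dots> = reflect_map \<phi> (\<Sum>k\<in>?K. Poly_Mapping.single k (?uk k))
      * reflect_map \<phi> (\<Sum>l\<in>?L. Poly_Mapping.single l (?vl l))"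
    by (simp add: reflect_map_sum reflect_map_single sum_product mult_single)
  finally show ?thesis
    by (simp only: sum_single_lookup)
qed

end

interpretation id_hom: semiring_hom "\<lambda>x::complex. x"
  by unfold_locales auto

interpretation cnj_hom: semiring_hom cnj
  by unfold_locales auto

lemmas lrefl_add = id_hom.reflect_map_add[folded lrefl_eq_reflect_map]
lemmas lrefl_mult = id_hom.reflect_map_mult[folded lrefl_eq_reflect_map]
lemmas lrefl_single = id_hom.reflect_map_single[folded lrefl_eq_reflect_map]
lemmas lstar_add = cnj_hom.reflect_map_add[folded lstar_eq_reflect_map]
lemmas lstar_mult = cnj_hom.reflect_map_mult[folded lstar_eq_reflect_map]
lemmas lstar_single = cnj_hom.reflect_map_single[folded lstar_eq_reflect_map]

lemma lstar_lstar [simp]: "lstar (lstar u) = u"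
  by (rule poly_mapping_eqI) (simp add: lstar_eq_reflect_map lookup_reflect_map)

lemma lstar_lrefl: "lstar (lrefl u) = lrefl (lstar u)"
  by (rule poly_mapping_eqI) (simp add: lstar_eq_reflect_map lrefl_eq_reflect_map lookup_reflect_map)

lemma has_symmetry_single: "has_symmetry (Poly_Mapping.single k a) 1 (2 * k)"
  by (simp add: has_symmetry_def lrefl_single mult_single)

lemma has_symmetry_add:
  "has_symmetry u \<epsilon> c \<Longrightarrow> has_symmetry v \<epsilon> c \<Longrightarrow> has_symmetry (u + v) \<epsilon> c"
  by (simp add: has_symmetry_def lrefl_add distrib_left)

lemma has_symmetry_mult:
  assumes "has_symmetry u \<epsilon> c" and "has_symmetry v \<delta> d"
  shows "has_symmetry (u * v) (\<epsilon> * \<delta>) (c + d)"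
proof -
  have "u * v = (Poly_Mapping.single c \<epsilon> * lrefl u) * (Poly_Mapping.single d \<delta> * lrefl v)"
    using assms unfolding has_symmetry_def by (rule arg_cong2 [where f = "(*)"])
  also have "\<dots> = Poly_Mapping.single (c + d) (\<epsilon> * \<delta>) * lrefl (u * v)"
    by (simp add: lrefl_mult mult_single ac_simps)
  finally show ?thesis
    unfolding has_symmetry_def .
qed

lemma has_symmetry_lstar:
  assumes "has_symmetry u \<epsilon> c"
  shows "has_symmetry (lstar u) (cnj \<epsilon>) (- c)"
proof -
  have "lstar u = lstar (Poly_Mapping.single c \<epsilon> * lrefl u)"
    using assms unfolding has_symmetry_def by (rule arg_cong [where f = lstar])
  also have "\<dots> = Poly_Mapping.single (- c) (cnj \<epsilon>) * lrefl (lstar u)"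
    by (simp add: lstar_mult lstar_single lstar_lrefl)
  finally show ?thesis
    unfolding has_symmetry_def .
qed

lemma hermitian_diff_identity:
  fixes z w a1 a2 a3 a4 s1 s2 s3 s4 :: "'a::comm_ring_1"
  assumes "z * w = 1"
  shows "(a1*a3 + z*s2*a4) * (s1*s3 + w*a2*s4) - (a2*a3 + z*s1*a4) * (s2*s3 + w*a1*s4)
     = (a1*s1 - a2*s2) * (a3*s3 - a4*s4)"
proof -
  have "(a1*a3 + z*s2*a4) * (s1*s3 + w*a2*s4) - (a2*a3 + z*s1*a4) * (s2*s3 + w*a1*s4)
     = a1*s1*a3*s3 - a2*s2*a3*s3 + (z*w) * (a2*s2*a4*s4 - a1*s1*a4*s4)"
    by (simp add: algebra_simps)
  then show ?thesis
    using assms by (simp add: algebra_simps)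
qed

lemma lstar_norm_diff_mult:
  fixes u1 u2 u3 u4 :: laurent and c :: int
  defines "v1 \<equiv> u1 * u3 + Poly_Mapping.single c 1 * lstar u2 * u4"
    and "v2 \<equiv> u2 * u3 + Poly_Mapping.single c 1 * lstar u1 * u4"
  shows "v1 * lstar v1 - v2 * lstar v2
       = (u1 * lstar u1 - u2 * lstar u2) * (u3 * lstar u3 - u4 * lstar u4)"
proof -
  have "Poly_Mapping.single c 1 * Poly_Mapping.single (- c) 1 = (1::laurent)"
    by (simp add: mult_single)
  moreover have "lstar v1 = lstar u1 * lstar u3 + Poly_Mapping.single (- c) 1 * u2 * lstar u4"
    and "lstar v2 = lstar u2 * lstar u3 + Poly_Mapping.single (- c) 1 * u1 * lstar u4"
    by (simp_all add: v1_def v2_def lstar_add lstar_mult lstar_single)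
  ultimately show ?thesis
    unfolding v1_def v2_def by (simp only: hermitian_diff_identity)
qed

theorem lemma3p15:
  fixes u1 u2 u3 u4 :: laurent and \<epsilon>1 \<epsilon>2 \<epsilon>3 \<epsilon>4 :: complex and c1 c2 c3 c4 :: int
  assumes nz: "u1 \<noteq> 0" "u2 \<noteq> 0" "u3 \<noteq> 0" "u4 \<noteq> 0"
    and eps: "\<epsilon>1 \<in> {1, -1}" "\<epsilon>2 \<in> {1, -1}" "\<epsilon>3 \<in> {1, -1}" "\<epsilon>4 \<in> {1, -1}"
    and sym: "has_symmetry u1 \<epsilon>1 c1" "has_symmetry u2 \<epsilon>2 c2"
             "has_symmetry u3 \<epsilon>3 c3" "has_symmetry u4 \<epsilon>4 c4"
    and ratio: "Poly_Mapping.single (c1 - c2) (\<epsilon>1 / \<epsilon>2)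
              = Poly_Mapping.single (c3 - c4) (\<epsilon>3 / \<epsilon>4)"
  defines "u5 \<equiv> u1 * u3 + Poly_Mapping.single c1 1 * lstar u2 * u4"
    and "u6 \<equiv> u2 * u3 + Poly_Mapping.single c1 1 * lstar u1 * u4"
  shows "has_symmetry u5 (\<epsilon>1 * \<epsilon>3) (c1 + c3)
       \<and> has_symmetry u6 (\<epsilon>2 * \<epsilon>3) (c2 + c3)
       \<and> (Poly_Mapping.single ((c1 + c3) - (c2 + c3)) ((\<epsilon>1 * \<epsilon>3) / (\<epsilon>2 * \<epsilon>3))
           = Poly_Mapping.single (c1 - c2) (\<epsilon>1 / \<epsilon>2)
         \<and> Poly_Mapping.single (c1 - c2) (\<epsilon>1 / \<epsilon>2)
           = Poly_Mapping.single (c3 - c4) (\<epsilon>3 / \<epsilon>4))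
       \<and> u5 * lstar u5 - u6 * lstar u6
           = (u1 * lstar u1 - u2 * lstar u2) * (u3 * lstar u3 - u4 * lstar u4)"
proof -
  have "c1 - c2 = c3 - c4" and "\<epsilon>1 / \<epsilon>2 = \<epsilon>3 / \<epsilon>4"
    using ratio eps by (auto simp: single_eq_single_iff)
  then have c: "2 * c1 + - c2 + c4 = c1 + c3" "2 * c1 + - c1 + c4 = c2 + c3"
    and \<epsilon>: "1 * cnj \<epsilon>2 * \<epsilon>4 = \<epsilon>1 * \<epsilon>3" "1 * cnj \<epsilon>1 * \<epsilon>4 = \<epsilon>2 * \<epsilon>3"
    using eps by auto
  have "has_symmetry (Poly_Mapping.single c1 1 * lstar u2 * u4) (\<epsilon>1 * \<epsilon>3) (c1 + c3)"
    using has_symmetry_mult[OF has_symmetry_mult[OF has_symmetry_single[of c1 1] has_symmetry_lstar[OF sym(2)]] sym(4)]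
    unfolding c \<epsilon> .
  moreover have "has_symmetry (Poly_Mapping.single c1 1 * lstar u1 * u4) (\<epsilon>2 * \<epsilon>3) (c2 + c3)"
    using has_symmetry_mult[OF has_symmetry_mult[OF has_symmetry_single[of c1 1] has_symmetry_lstar[OF sym(1)]] sym(4)]
    unfolding c \<epsilon> .
  ultimately have "has_symmetry u5 (\<epsilon>1 * \<epsilon>3) (c1 + c3)" and "has_symmetry u6 (\<epsilon>2 * \<epsilon>3) (c2 + c3)"
    unfolding u5_def u6_def using sym by (simp_all add: has_symmetry_add has_symmetry_mult)
  moreover have "\<epsilon>3 \<noteq> 0"
    using eps by auto
  ultimately show ?thesis
    using ratio lstar_norm_diff_mult unfolding u5_def u6_def by simp
qed

end
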